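(* Let $W,V$ be subspaces of $\mathbb{R}^n$ with $\mathbb{R}^n=W\oplus V^\perp$, and let $\mu\in\mathcal{P}_2(W)$ be a probabilistic frame for $W$ with frame operator $\mathbf{S}_\mu$. Fix $\mathbf{f}\in\mathbb{R}^n$ and suppose $\boldsymbol{\pi}_{WV^\perp}\mathbf{f}=\int_W\mathbf{x}\,\omega(\mathbf{x})\,d\mu(\mathbf{x})$ for some $\omega\in L^2(\mu,W)$. Then $$\int_W|\omega(\mathbf{x})|^2d\mu(\mathbf{x})=\int_W|\langle\mathbf{f},\boldsymbol{\pi}_{VW^\perp}\mathbf{S}_\mu^\dagger\mathbf{x}\rangle|^2d\mu(\mathbf{x})+\int_W|\omega(\mathbf{x})-\langle\mathbf{f},\boldsymbol{\pi}_{VW^\perp}\mathbf{S}_\mu^\dagger\mathbf{x}\rangle|^2d\mu(\mathbf{x}).$$ Consequently $\int_W|\omega(\mathbf{x})|^2d\mu(\mathbf{x})\ge\int_W|\langle\mathbf{f},\boldsymbol{\pi}_{VW^\perp}\mathbf{S}_\mu^\dagger\mathbf{x}\rangle|^2d\mu(\mathbf{x})$, with equality if and only if $\omega(\mathbf{x})=\langle\mathbf{f},\boldsymbol{\pi}_{VW^\perp}\mathbf{S}_\mu^\dagger\mathbf{x}\rangle$ for $\mu$-almost all $\mathbf{x}\in W$.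
   Context: $\mathcal{P}_2(W)$ denotes Borel probability measures on $\mathbb{R}^n$ concentrated on $W$ with finite second moment. $\mu\in\mathcal{P}_2(W)$ is a probabilistic frame for $W$ if there exist $0<A\le B<\infty$ with $A\|\mathbf{x}\|^2\le\int_W|\langle\mathbf{x},\mathbf{y}\rangle|^2d\mu(\mathbf{y})\le B\|\mathbf{x}\|^2$ for all $\mathbf{x}\in W$; its frame operator is $\mathbf{S}_\mu=\int_W\mathbf{y}\mathbf{y}^td\mu(\mathbf{y})$, with Moore–Penrose inverse $\mathbf{S}_\mu^\dagger$. $L^2(\mu,W)$ is the space of real-valued square-$\mu$-integrable functions on $W$. $\boldsymbol{\pi}_{WV^\perp}$ is the oblique projection onto $W$ along $V^\perp$ and $\boldsymbol{\pi}_{VW^\perp}$ the oblique projection onto $V$ along $W^\perp$. *)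

theory Defs
  imports "HOL-Analysis.Analysis" "HOL-Probability.Probability"
begin

definition mp_pinv :: "real^'n^'n \<Rightarrow> real^'n^'n" where
  "mp_pinv A = (THE B. A ** B ** A = A \<and> B ** A ** B = B \<and>
      transpose (A ** B) = A ** B \<and> transpose (B ** A) = B ** A)"

definition direct_sum_univ :: "('a::real_vector) set \<Rightarrow> 'a set \<Rightarrow> bool" where
  "direct_sum_univ W U \<longleftrightarrow> subspace W \<and> subspace U \<and> W \<inter> U = {0} \<and>
      (\<forall>x. \<exists>w u. w \<in> W \<and> u \<in> U \<and> x = w + u)"

text \<open>Oblique projection onto W along U (meaningful when UNIV = W (+) U).\<close>
definition oblique_proj :: "('a::real_vector) set \<Rightarrow> 'a set \<Rightarrow> 'a \<Rightarrow> 'a" where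
  "oblique_proj W U x = (THE w. w \<in> W \<and> x - w \<in> U)"

definition P2 :: "('a::euclidean_space) set \<Rightarrow> 'a measure \<Rightarrow> bool" where
  "P2 W \<mu> \<longleftrightarrow> prob_space \<mu> \<and> sets \<mu> = sets borel \<and> (AE x in \<mu>. x \<in> W) \<and>
      integrable \<mu> (\<lambda>x. (norm x)\<^sup>2)"

definition prob_frame :: "('a::euclidean_space) set \<Rightarrow> 'a measure \<Rightarrow> bool" where
  "prob_frame W \<mu> \<longleftrightarrow> (\<exists>A B. 0 < A \<and> A \<le> B \<and>
      (\<forall>x\<in>W. A * (norm x)\<^sup>2 \<le> (\<integral>y. \<bar>x \<bullet> y\<bar>\<^sup>2 \<partial>\<mu>) \<and>
               (\<integral>y. \<bar>x \<bullet> y\<bar>\<^sup>2 \<partial>\<mu>) \<le> B * (norm x)\<^sup>2))"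

definition frame_op :: "(real^'n) measure \<Rightarrow> real^'n^'n" where
  "frame_op \<mu> = (\<chi> i j. \<integral>y. y $ i * y $ j \<partial>\<mu>)"

end

theory Submission
  imports Defs
begin

text \<open>Let \<open>h\<close> be the oblique projection of \<open>f\<close> onto \<open>W\<close> along \<open>V\<^sup>\<bottom>\<close>, and \<open>B = S\<^sub>\<mu>\<^sup>\<dagger>\<close>.
  The projection onto \<open>V\<close> along \<open>W\<^sup>\<bottom>\<close> is the adjoint of the projection onto \<open>W\<close> along
  \<open>V\<^sup>\<bottom>\<close>, so \<open>g x = \<langle>B h, x\<rangle>\<close>. As \<open>B\<close> is symmetric with \<open>B S\<^sub>\<mu> B = B\<close>, the integral of \<open>g\<^sup>2\<close>
  is \<open>\<langle>B h, S\<^sub>\<mu> B h\<rangle> = \<langle>B h, h\<rangle>\<close>, which by the representation \<open>h = \<integral> \<omega>(x) x d\<mu>\<close> equals the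
  integral of \<open>\<omega> g\<close>. Hence \<open>\<omega> - g\<close> is orthogonal to \<open>g\<close> in \<open>L\<^sup>2(\<mu>)\<close>, and the identity is
  Pythagoras' theorem.\<close>

lemma oblique_proj_eqI:
  assumes "direct_sum_univ W U" "w \<in> W" "x - w \<in> U"
  shows "oblique_proj W U x = w"
  unfolding oblique_proj_def
proof (rule the_equality)
  show "w \<in> W \<and> x - w \<in> U" using assms by simp
next
  fix w' assume w': "w' \<in> W \<and> x - w' \<in> U"
  have W: "subspace W" and U: "subspace U" and WU: "W \<inter> U = {0}"
    using assms(1) by (simp_all add: direct_sum_univ_def)
  have "w - w' \<in> W"
    using W assms(2) w' by (simp add: subspace_diff)
  moreover have "w - w' = (x - w') - (x - w)" by simp
  then have "w - w' \<in> U"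
    using U assms(3) w' by (metis subspace_diff)
  ultimately have "w - w' = 0"
    using WU by blast
  then show "w' = w" by simp
qed

lemma oblique_proj_mem:
  assumes "direct_sum_univ W U"
  shows "oblique_proj W U x \<in> W" and "x - oblique_proj W U x \<in> U"
proof -
  obtain w u where "w \<in> W" "u \<in> U" "x = w + u"
    using assms unfolding direct_sum_univ_def by blast
  with oblique_proj_eqI[OF assms] have "oblique_proj W U x = w \<and> w \<in> W \<and> x - w \<in> U"
    by simp
  then show "oblique_proj W U x \<in> W" and "x - oblique_proj W U x \<in> U" by simp_all
qed

lemma linear_oblique_proj:
  assumes ds: "direct_sum_univ W U"
  shows "linear (oblique_proj W U)"
proof (rule linearI)
  have W: "subspace W" and U: "subspace U"
    using ds by (simp_all add: direct_sum_univ_def)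
  note mem = oblique_proj_mem[OF ds]
  fix x y :: 'a and c :: real
  show "oblique_proj W U (x + y) = oblique_proj W U x + oblique_proj W U y"
  proof (rule oblique_proj_eqI[OF ds])
    show "oblique_proj W U x + oblique_proj W U y \<in> W"
      using mem subspace_add[OF W] by blast
    have "x + y - (oblique_proj W U x + oblique_proj W U y) =
        (x - oblique_proj W U x) + (y - oblique_proj W U y)"
      by simp
    then show "x + y - (oblique_proj W U x + oblique_proj W U y) \<in> U"
      using mem subspace_add[OF U] by metis
  qed
  show "oblique_proj W U (c *\<^sub>R x) = c *\<^sub>R oblique_proj W U x"
    using mem[of x] subspace_scale[OF W] subspace_scale[OF U, of "x - oblique_proj W U x" c]
    by (intro oblique_proj_eqI[OF ds]) (auto simp: algebra_simps)
qed

lemma direct_sum_univ_orthogonal_comp: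
  fixes K :: "'a::euclidean_space set"
  assumes "subspace K"
  shows "direct_sum_univ K (orthogonal_comp K)"
proof -
  have "\<exists>w u. w \<in> K \<and> u \<in> orthogonal_comp K \<and> x = w + u" for x
    using subspace_sum_orthogonal_comp[OF assms] set_plus_elim[of x K] by blast
  then show ?thesis
    using assms orthogonal_Int_0[OF assms] subspace_orthogonal_comp
    unfolding direct_sum_univ_def by blast
qed

lemma direct_sum_univ_orthogonal_comp_swap:
  fixes W V :: "'a::euclidean_space set"
  assumes ds: "direct_sum_univ W (orthogonal_comp V)" and V: "subspace V"
  shows "direct_sum_univ V (orthogonal_comp W)"
proof -
  have W: "subspace W" and WV: "W \<inter> orthogonal_comp V = {0}"
    using ds by (simp_all add: direct_sum_univ_def)
  have "v = 0" if v: "v \<in> V" "v \<in> orthogonal_comp W" for v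
  proof -
    obtain a b where ab: "a \<in> W" "b \<in> orthogonal_comp V" "v = a + b"
      using ds unfolding direct_sum_univ_def by blast
    have "v \<bullet> a = 0" "v \<bullet> b = 0"
      using v ab(1,2) by (auto simp: orthogonal_comp_def orthogonal_def inner_commute)
    then have "v \<bullet> v = 0"
      using ab(3) by (simp add: inner_add_right)
    then show ?thesis by simp
  qed
  then have VW: "V \<inter> orthogonal_comp W = {0}"
    using V subspace_0 subspace_orthogonal_comp by blast
  have "V \<subseteq> V + orthogonal_comp W"
    by (metis subsetI add.right_neutral set_plus_intro subspace_0 subspace_orthogonal_comp)
  moreover have "orthogonal_comp W \<subseteq> V + orthogonal_comp W"
    by (metis subsetI add.left_neutral set_plus_intro subspace_0 V)
  ultimately have "orthogonal_comp (V + orthogonal_comp W) \<subseteq> orthogonal_comp V \<inter> W"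
    using orthogonal_comp_anti_mono orthogonal_comp_self[OF W] by (metis le_inf_iff)
  then have "orthogonal_comp (V + orthogonal_comp W) = {0}"
    using WV subspace_0[OF subspace_orthogonal_comp] by blast
  moreover have "V + orthogonal_comp W = {a + b |a b. a \<in> V \<and> b \<in> orthogonal_comp W}"
    by (auto simp: set_plus_def)
  then have "subspace (V + orthogonal_comp W)"
    using subspace_sums[OF V subspace_orthogonal_comp] by simp
  ultimately have "V + orthogonal_comp W = UNIV"
    by (metis orthogonal_comp_self orthogonal_comp_null)
  then have "\<exists>a b. a \<in> V \<and> b \<in> orthogonal_comp W \<and> y = a + b" for y
    using set_plus_elim[of y V] by blast
  then show ?thesis
    using V VW subspace_orthogonal_comp unfolding direct_sum_univ_def by blast
qed

lemma inner_oblique_proj_orthogonal_comp: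
  fixes W V :: "'a::euclidean_space set"
  assumes ds: "direct_sum_univ W (orthogonal_comp V)" and V: "subspace V"
  shows "f \<bullet> oblique_proj V (orthogonal_comp W) y = oblique_proj W (orthogonal_comp V) f \<bullet> y"
proof -
  note ds' = direct_sum_univ_orthogonal_comp_swap[OF ds V]
  define w where "w = oblique_proj W (orthogonal_comp V) f"
  define a where "a = oblique_proj V (orthogonal_comp W) y"
  have "w \<in> W" "f - w \<in> orthogonal_comp V" "a \<in> V" "y - a \<in> orthogonal_comp W"
    unfolding w_def a_def using oblique_proj_mem[OF ds] oblique_proj_mem[OF ds'] by auto
  then have "(f - w) \<bullet> a = 0" "w \<bullet> (y - a) = 0"
    by (auto simp: orthogonal_comp_def orthogonal_def inner_commute)
  then show ?thesis
    unfolding w_def[symmetric] a_def[symmetric] by (simp add: algebra_simps)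
qed

lemma orthogonal_projection_matrix:
  fixes K :: "(real^'n) set"
  assumes K: "subspace K"
  obtains Q :: "real^'n^'n"
  where "transpose Q = Q" "\<And>x. Q *v x \<in> K" "\<And>x. x \<in> K \<Longrightarrow> Q *v x = x"
proof -
  define p where "p = oblique_proj K (orthogonal_comp K)"
  note ds = direct_sum_univ_orthogonal_comp[OF K]
  have lin: "linear p"
    unfolding p_def by (rule linear_oblique_proj[OF ds])
  have Qv: "matrix p *v x = p x" for x
    using matrix_vector_mul(2)[OF lin] by metis
  have mem: "p x \<in> K" "x - p x \<in> orthogonal_comp K" for x
    unfolding p_def using oblique_proj_mem[OF ds] by auto
  have "p x \<bullet> y = x \<bullet> p y" for x y
  proof -
    have "p x \<bullet> (y - p y) = 0" "(x - p x) \<bullet> p y = 0"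
      using mem by (auto simp: orthogonal_comp_def orthogonal_def inner_commute)
    then show ?thesis by (simp add: algebra_simps)
  qed
  then have "adjoint p = p"
    by (intro adjoint_unique) auto
  then have "transpose (matrix p) = matrix p"
    using matrix_adjoint[OF lin] by simp
  moreover have "p x = x" if "x \<in> K" for x
    unfolding p_def using that subspace_0[OF subspace_orthogonal_comp]
    by (intro oblique_proj_eqI[OF ds]) auto
  ultimately show thesis
    using that[of "matrix p"] mem by (simp add: Qv)
qed

lemma matrix_add_rdistrib: "(A + B) ** C = A ** C + B ** C"
  by (vector matrix_matrix_mult_def sum.distrib[symmetric] field_simps)

lemma matrix_diff_ldistrib:
  fixes A :: "'a::ring_1^'n^'m"
  shows "A ** (B - C) = A ** B - A ** C"
  by (vector matrix_matrix_mult_def sum_subtractf[symmetric] field_simps)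

lemma matrix_diff_rdistrib:
  fixes A :: "'a::ring_1^'n^'m"
  shows "(A - B) ** C = A ** C - B ** C"
  by (vector matrix_matrix_mult_def sum_subtractf[symmetric] field_simps)

lemma transpose_diff: "transpose (A - B) = transpose A - transpose B"
  by (simp add: transpose_def vec_eq_iff)

definition is_mp_pinv :: "real^'n^'n \<Rightarrow> real^'n^'n \<Rightarrow> bool" where
  "is_mp_pinv A B \<longleftrightarrow> A ** B ** A = A \<and> B ** A ** B = B \<and>
      transpose (A ** B) = A ** B \<and> transpose (B ** A) = B ** A"

lemma is_mp_pinv_transpose:
  assumes "is_mp_pinv A B"
  shows "is_mp_pinv (transpose A) (transpose B)"
  using assms unfolding is_mp_pinv_def
  by (metis matrix_transpose_mul matrix_mul_assoc transpose_transpose)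

lemma is_mp_pinv_absorb:
  assumes B: "is_mp_pinv A B" and C: "is_mp_pinv A C"
  shows "B = B ** A ** C"
proof -
  have BAB: "B ** A ** B = B" and AB: "transpose (A ** B) = A ** B"
    using B by (simp_all add: is_mp_pinv_def)
  have ACA: "A ** C ** A = A" and AC: "transpose (A ** C) = A ** C"
    using C by (simp_all add: is_mp_pinv_def)
  have "B = B ** transpose (A ** B)"
    using BAB AB by (simp add: matrix_mul_assoc)
  also have "\<dots> = B ** transpose B ** transpose (A ** C ** A)"
    using ACA by (simp add: matrix_transpose_mul matrix_mul_assoc)
  also have "\<dots> = B ** transpose (A ** B) ** transpose (A ** C)"
    by (simp add: matrix_transpose_mul matrix_mul_assoc)
  also have "\<dots> = B ** A ** C"
    using AB AC BAB by (simp add: matrix_mul_assoc)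
  finally show ?thesis .
qed

lemma is_mp_pinv_unique:
  assumes B: "is_mp_pinv A B" and C: "is_mp_pinv A C"
  shows "B = C"
proof -
  have "transpose C = transpose C ** transpose A ** transpose B"
    using is_mp_pinv_absorb[OF is_mp_pinv_transpose[OF C] is_mp_pinv_transpose[OF B]] .
  then have "C = B ** A ** C"
    by (metis matrix_transpose_mul matrix_mul_assoc transpose_transpose)
  with is_mp_pinv_absorb[OF B C] show ?thesis by simp
qed

lemma is_mp_pinv_mp_pinv:
  assumes "is_mp_pinv A B"
  shows "is_mp_pinv A (mp_pinv A)"
proof -
  have "\<exists>!B. is_mp_pinv A B"
    using assms is_mp_pinv_unique by blast
  from theI'[OF this] show ?thesis
    by (simp add: mp_pinv_def is_mp_pinv_def)
qed

lemma kernel_projection_matrix: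
  fixes S :: "real^'n^'n"
  assumes symS: "transpose S = S"
  obtains Q :: "real^'n^'n"
  where "transpose Q = Q" "S ** Q = 0" "Q ** S = 0" "Q ** Q = Q" "invertible (S + Q)"
proof -
  let ?K = "{x. S *v x = 0}"
  have K: "subspace ?K"
    by (auto simp: subspace_def matrix_vector_right_distrib matrix_vector_mult_scaleR)
  obtain Q where symQ: "transpose Q = Q" and range: "\<And>x. Q *v x \<in> ?K"
    and Q_id: "\<And>x. x \<in> ?K \<Longrightarrow> Q *v x = x"
    using orthogonal_projection_matrix[OF K] by blast
  have ker: "S *v (Q *v x) = 0" for x
    using range by simp
  have SQ: "S ** Q = 0"
    using ker by (simp add: matrix_eq flip: matrix_vector_mul_assoc)
  have "Q ** S = transpose (S ** Q)"
    using symS symQ by (simp add: matrix_transpose_mul)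
  then have QS: "Q ** S = 0"
    using SQ by (simp add: transpose_def vec_eq_iff)
  have QQ: "Q ** Q = Q"
    using ker Q_id by (auto simp: matrix_eq simp flip: matrix_vector_mul_assoc)
  have "x = 0" if "(S + Q) *v x = 0" for x
  proof -
    have "Q ** (S + Q) = Q"
      by (simp add: matrix_add_ldistrib QS QQ)
    then have "Q *v x = 0"
      using arg_cong[OF that, of "(*v) Q"] by (simp add: matrix_vector_mul_assoc)
    then show ?thesis
      using that Q_id by (simp add: matrix_vector_mult_add_rdistrib)
  qed
  then have "invertible (S + Q)"
    by (simp add: invertible_left_inverse matrix_left_invertible_ker)
  with symQ SQ QS QQ show thesis
    using that by blast
qed

text \<open>With \<open>Q\<close> the orthogonal projection onto the kernel of \<open>S\<close>, the matrix \<open>(S + Q)\<inverse> - Q\<close>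
  is the Moore--Penrose inverse of \<open>S\<close>.\<close>

lemma is_mp_pinv_exists_symmetric:
  fixes S :: "real^'n^'n"
  assumes "transpose S = S"
  shows "\<exists>B. is_mp_pinv S B"
proof -
  obtain Q where symQ: "transpose Q = Q" and SQ: "S ** Q = 0" and QS: "Q ** S = 0"
    and QQ: "Q ** Q = Q" and inv: "invertible (S + Q)"
    using kernel_projection_matrix[OF assms] by blast
  obtain N where MN: "(S + Q) ** N = mat 1" and NM: "N ** (S + Q) = mat 1"
    using inv by (auto simp: invertible_def)
  have NQ: "N ** Q = Q"
    using NM by (metis SQ QQ matrix_add_rdistrib add_0 matrix_mul_assoc matrix_mul_lid)
  have QN: "Q ** N = Q"
    using MN by (metis QS QQ matrix_add_ldistrib add_0 matrix_mul_assoc matrix_mul_rid)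
  have "S ** N = (S + Q) ** N - Q ** N"
    by (simp add: matrix_add_rdistrib)
  then have SB: "S ** (N - Q) = mat 1 - Q"
    using MN QN SQ by (simp add: matrix_diff_ldistrib)
  have "N ** S = N ** (S + Q) - N ** Q"
    by (simp add: matrix_add_ldistrib)
  then have BS: "(N - Q) ** S = mat 1 - Q"
    using NM NQ QS by (simp add: matrix_diff_rdistrib)
  have "is_mp_pinv S (N - Q)"
    unfolding is_mp_pinv_def
  proof (intro conjI)
    show "S ** (N - Q) ** S = S"
      using SB QS by (simp add: matrix_diff_rdistrib)
    show "(N - Q) ** S ** (N - Q) = N - Q"
      using BS QN QQ by (simp add: matrix_diff_rdistrib matrix_diff_ldistrib)
    show "transpose (S ** (N - Q)) = S ** (N - Q)" "transpose ((N - Q) ** S) = (N - Q) ** S"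
      using SB BS symQ by (simp_all add: transpose_diff)
  qed
  then show ?thesis ..
qed

lemma is_mp_pinv_mp_pinv_symmetric:
  fixes S :: "real^'n^'n"
  assumes "transpose S = S"
  shows "is_mp_pinv S (mp_pinv S)"
  using is_mp_pinv_exists_symmetric[OF assms] is_mp_pinv_mp_pinv by blast

lemma transpose_mp_pinv_symmetric:
  fixes S :: "real^'n^'n"
  assumes "transpose S = S"
  shows "transpose (mp_pinv S) = mp_pinv S"
  using is_mp_pinv_transpose[OF is_mp_pinv_mp_pinv_symmetric[OF assms]]
    is_mp_pinv_mp_pinv_symmetric[OF assms] assms is_mp_pinv_unique by metis

lemma inner_mp_pinv_quadratic_form:
  assumes "is_mp_pinv A B" and "transpose B = B"
  shows "(B *v h) \<bullet> (A *v (B *v h)) = (B *v h) \<bullet> h"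
proof -
  have "h v* B = B *v h"
    using assms(2) transpose_matrix_vector[of B h] by simp
  then have "(B *v h) \<bullet> (A *v (B *v h)) = h \<bullet> (B *v (A *v (B *v h)))"
    by (metis dot_lmul_matrix)
  also have "\<dots> = h \<bullet> ((B ** A ** B) *v h)"
    by (simp add: matrix_vector_mul_assoc matrix_mul_assoc)
  also have "\<dots> = h \<bullet> (B *v h)"
    using assms(1) by (simp add: is_mp_pinv_def)
  also have "\<dots> = (B *v h) \<bullet> h"
    by (simp add: inner_commute)
  finally show ?thesis .
qed

lemma transpose_frame_op: "transpose (frame_op \<mu>) = frame_op \<mu>"
  by (simp add: transpose_def frame_op_def vec_eq_iff mult.commute)

lemma integrable_component_mult:
  fixes \<mu> :: "(real^'n) measure"
  assumes sets: "sets \<mu> = sets borel" and sq: "integrable \<mu> (\<lambda>x. (norm x)\<^sup>2)"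
  shows "integrable \<mu> (\<lambda>x. x $ i * x $ j)"
proof (rule Bochner_Integration.integrable_bound[OF sq])
  show "(\<lambda>x. x $ i * x $ j) \<in> borel_measurable \<mu>"
    by (simp add: measurable_cong_sets[OF sets refl])
  have "\<bar>x $ i\<bar> * \<bar>x $ j\<bar> \<le> norm x * norm x" for x :: "real^'n"
    by (intro mult_mono) (auto simp: component_le_norm_cart)
  then show "AE x in \<mu>. norm (x $ i * x $ j) \<le> norm ((norm x)\<^sup>2)"
    by (simp add: abs_mult power2_eq_square)
qed

lemma
  fixes \<mu> :: "(real^'n) measure"
  assumes "sets \<mu> = sets borel" and "integrable \<mu> (\<lambda>x. (norm x)\<^sup>2)"
  shows integrable_inner_square: "integrable \<mu> (\<lambda>x. (u \<bullet> x)\<^sup>2)"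
    and integral_inner_square_frame_op: "(\<integral>x. (u \<bullet> x)\<^sup>2 \<partial>\<mu>) = u \<bullet> (frame_op \<mu> *v u)"
proof -
  note ij = integrable_component_mult[OF assms]
  have expand: "(u \<bullet> x)\<^sup>2 = (\<Sum>i\<in>UNIV. \<Sum>j\<in>UNIV. u $ i * u $ j * (x $ i * x $ j))" for x :: "real^'n"
    by (simp add: inner_vec_def power2_eq_square sum_product mult_ac)
  show "integrable \<mu> (\<lambda>x. (u \<bullet> x)\<^sup>2)"
    unfolding expand by (intro Bochner_Integration.integrable_sum integrable_mult_right ij)
  have "(\<integral>x. (u \<bullet> x)\<^sup>2 \<partial>\<mu>) = (\<Sum>i\<in>UNIV. \<Sum>j\<in>UNIV. u $ i * u $ j * (\<integral>x. x $ i * x $ j \<partial>\<mu>))"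
    unfolding expand using ij by simp
  also have "\<dots> = u \<bullet> (frame_op \<mu> *v u)"
    by (simp add: inner_vec_def frame_op_def matrix_vector_mult_def sum_distrib_left mult_ac)
  finally show "(\<integral>x. (u \<bullet> x)\<^sup>2 \<partial>\<mu>) = u \<bullet> (frame_op \<mu> *v u)" .
qed

lemma integrable_scaleR_of_square_integrable:
  fixes \<mu> :: "(real^'n) measure"
  assumes sets: "sets \<mu> = sets borel" and sq: "integrable \<mu> (\<lambda>x. (norm x)\<^sup>2)"
    and \<omega>: "\<omega> \<in> borel_measurable \<mu>" "integrable \<mu> (\<lambda>x. (\<omega> x)\<^sup>2)"
  shows "integrable \<mu> (\<lambda>x. \<omega> x *\<^sub>R x)"
proof (rule Bochner_Integration.integrable_bound[OF Bochner_Integration.integrable_add[OF \<omega>(2) sq]])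
  show "(\<lambda>x. \<omega> x *\<^sub>R x) \<in> borel_measurable \<mu>"
    using \<omega>(1) by (intro borel_measurable_scaleR) (simp_all add: measurable_cong_sets[OF sets refl])
  have "\<bar>a\<bar> * b \<le> a\<^sup>2 + b\<^sup>2" if "0 \<le> b" for a b :: real
  proof -
    have "0 \<le> (\<bar>a\<bar> - b)\<^sup>2" by simp
    then have "2 * (\<bar>a\<bar> * b) \<le> a\<^sup>2 + b\<^sup>2"
      by (simp add: power2_diff)
    moreover have "0 \<le> \<bar>a\<bar> * b" using that by simp
    ultimately show ?thesis by linarith
  qed
  then show "AE x in \<mu>. norm (\<omega> x *\<^sub>R x) \<le> norm ((\<omega> x)\<^sup>2 + (norm x)\<^sup>2)"
    by simp
qed

lemma integral_square_pythagoras: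
  fixes \<omega> g :: "'a \<Rightarrow> real"
  assumes \<omega>: "integrable M (\<lambda>x. (\<omega> x)\<^sup>2)" and g: "integrable M (\<lambda>x. (g x)\<^sup>2)"
    and \<omega>g: "integrable M (\<lambda>x. \<omega> x * g x)"
    and orth: "(\<integral>x. (g x)\<^sup>2 \<partial>M) = (\<integral>x. \<omega> x * g x \<partial>M)"
  shows "(\<integral>x. (\<omega> x)\<^sup>2 \<partial>M) = (\<integral>x. (g x)\<^sup>2 \<partial>M) + (\<integral>x. (\<omega> x - g x)\<^sup>2 \<partial>M)"
    and "(\<integral>x. (g x)\<^sup>2 \<partial>M) \<le> (\<integral>x. (\<omega> x)\<^sup>2 \<partial>M)"
    and "(\<integral>x. (\<omega> x)\<^sup>2 \<partial>M) = (\<integral>x. (g x)\<^sup>2 \<partial>M) \<longleftrightarrow> (AE x in M. \<omega> x = g x)"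
proof -
  have expand: "(\<omega> x - g x)\<^sup>2 = (\<omega> x)\<^sup>2 - 2 * (\<omega> x * g x) + (g x)\<^sup>2" for x
    by (simp add: power2_diff)
  have residual: "integrable M (\<lambda>x. (\<omega> x - g x)\<^sup>2)"
    unfolding expand using \<omega> g \<omega>g by simp
  show split: "(\<integral>x. (\<omega> x)\<^sup>2 \<partial>M) = (\<integral>x. (g x)\<^sup>2 \<partial>M) + (\<integral>x. (\<omega> x - g x)\<^sup>2 \<partial>M)"
    unfolding expand using \<omega> g \<omega>g orth by simp
  then show "(\<integral>x. (g x)\<^sup>2 \<partial>M) \<le> (\<integral>x. (\<omega> x)\<^sup>2 \<partial>M)"
    by simp
  show "(\<integral>x. (\<omega> x)\<^sup>2 \<partial>M) = (\<integral>x. (g x)\<^sup>2 \<partial>M) \<longleftrightarrow> (AE x in M. \<omega> x = g x)"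
    using split integral_nonneg_eq_0_iff_AE[OF residual] by simp
qed

lemma integral_square_dual_coeff:
  fixes \<mu> :: "(real^'n) measure"
  assumes sets: "sets \<mu> = sets borel" and sq: "integrable \<mu> (\<lambda>x. (norm x)\<^sup>2)"
    and \<omega>x: "integrable \<mu> (\<lambda>x. \<omega> x *\<^sub>R x)" and h: "h = (\<integral>x. \<omega> x *\<^sub>R x \<partial>\<mu>)"
    and pinv: "is_mp_pinv (frame_op \<mu>) B" and symB: "transpose B = B"
  shows "(\<integral>x. ((B *v h) \<bullet> x)\<^sup>2 \<partial>\<mu>) = (\<integral>x. \<omega> x * ((B *v h) \<bullet> x) \<partial>\<mu>)"
proof -
  have "(\<integral>x. ((B *v h) \<bullet> x)\<^sup>2 \<partial>\<mu>) = (B *v h) \<bullet> (frame_op \<mu> *v (B *v h))"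
    by (rule integral_inner_square_frame_op[OF sets sq])
  also have "\<dots> = (B *v h) \<bullet> h"
    by (rule inner_mp_pinv_quadratic_form[OF pinv symB])
  also have "\<dots> = (\<integral>x. (B *v h) \<bullet> (\<omega> x *\<^sub>R x) \<partial>\<mu>)"
    using h \<omega>x by (simp del: inner_scaleR_right)
  finally show ?thesis
    by simp
qed

theorem proposition5p1:
  fixes W V :: "(real^'n) set" and \<mu> :: "(real^'n) measure"
    and f :: "real^'n" and \<omega> :: "real^'n \<Rightarrow> real"
  assumes subW: "subspace W" and subV: "subspace V"
    and dsum: "direct_sum_univ W (orthogonal_comp V)"
    and P2: "P2 W \<mu>" and frame: "prob_frame W \<mu>"
    and \<omega>_meas: "\<omega> \<in> borel_measurable \<mu>"
    and \<omega>_L2: "integrable \<mu> (\<lambda>x. (\<omega> x)\<^sup>2)"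
    and repr: "oblique_proj W (orthogonal_comp V) f = (\<integral>x. \<omega> x *\<^sub>R x \<partial>\<mu>)"
  defines "g \<equiv> (\<lambda>x. f \<bullet> oblique_proj V (orthogonal_comp W) (mp_pinv (frame_op \<mu>) *v x))"
  shows "(\<integral>x. \<bar>\<omega> x\<bar>\<^sup>2 \<partial>\<mu>) = (\<integral>x. \<bar>g x\<bar>\<^sup>2 \<partial>\<mu>) + (\<integral>x. \<bar>\<omega> x - g x\<bar>\<^sup>2 \<partial>\<mu>) \<and>
    (\<integral>x. \<bar>\<omega> x\<bar>\<^sup>2 \<partial>\<mu>) \<ge> (\<integral>x. \<bar>g x\<bar>\<^sup>2 \<partial>\<mu>) \<and>
    ((\<integral>x. \<bar>\<omega> x\<bar>\<^sup>2 \<partial>\<mu>) = (\<integral>x. \<bar>g x\<bar>\<^sup>2 \<partial>\<mu>) \<longleftrightarrow> (AE x in \<mu>. \<omega> x = g x))"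
proof -
  have sets: "sets \<mu> = sets borel" and sq: "integrable \<mu> (\<lambda>x. (norm x)\<^sup>2)"
    using P2 by (simp_all add: P2_def)
  define h where "h = oblique_proj W (orthogonal_comp V) f"
  define B where "B = mp_pinv (frame_op \<mu>)"
  have pinv: "is_mp_pinv (frame_op \<mu>) B" and symB: "transpose B = B"
    unfolding B_def
    using is_mp_pinv_mp_pinv_symmetric transpose_mp_pinv_symmetric transpose_frame_op by blast+
  have g_eq: "g = (\<lambda>x. (B *v h) \<bullet> x)"
  proof
    fix x
    have "g x = h \<bullet> (B *v x)"
      unfolding g_def h_def B_def by (rule inner_oblique_proj_orthogonal_comp[OF dsum subV])
    also have "\<dots> = (B *v h) \<bullet> x"
      using symB transpose_matrix_vector[of B h] by (simp add: dot_lmul_matrix)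
    finally show "g x = (B *v h) \<bullet> x" .
  qed
  have \<omega>x: "integrable \<mu> (\<lambda>x. \<omega> x *\<^sub>R x)"
    by (rule integrable_scaleR_of_square_integrable[OF sets sq \<omega>_meas \<omega>_L2])
  have "integrable \<mu> (\<lambda>x. \<omega> x * g x)"
    using Bochner_Integration.integrable_inner_right[OF \<omega>x, of "B *v h"] by (simp add: g_eq)
  then show ?thesis
    using integral_square_pythagoras[OF \<omega>_L2 _ _ integral_square_dual_coeff[OF sets sq \<omega>x repr pinv symB]]
      integrable_inner_square[OF sets sq]
    by (simp add: g_eq h_def power2_abs)
qed

end
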